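(* For every Lie groupoid $\mathscr G\rightrightarrows M$, the group ${\rm Diff}_{r(\mathscr G)}(\mathscr G)$ of diffeomorphisms $\Phi\colon\mathscr G\to\mathscr G$ that are equivariant for the canonical right $\mathscr G$-module structure $(\mathscr G,s,r)$ (i.e. $s\circ\Phi=s$ and $\Phi(g.h)=\Phi(g).h$ whenever $s(g)=t(h)$) coincides with $L(\mathbb B)=\{L_\beta\mid\beta\in\mathbb B\}$.
   Context: A Lie groupoid $\mathscr G\rightrightarrows M$ has surjective submersions $s,t\colon\mathscr G\to M$ (source, target), units ${\rm Id}_m$, inverses $g^{-1}$ and multiplication $g.h$ defined iff $s(g)=t(h)$. A (global) bisection is a smooth map $\beta\colon M\to\mathscr G$ with $s\circ\beta={\rm id}_M$ and $t\circ\beta\in{\rm Diff}(M)$; $\mathbb B$ denotes the group of bisections. For $\beta\in\mathbb B$, the left multiplication $L_\beta\colon\mathscr G\to\mathscr G$ is $L_\beta(g)=\beta(t(g)).g$. The right translations are $r_h(g)=g.h$ for $s(g)=t(h)$. *)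

theory Defs
  imports "HOL-Analysis.Analysis"
begin

inductive_set iter_derivs :: "('a::real_normed_vector \<Rightarrow> 'b::real_normed_vector) \<Rightarrow> ('a \<Rightarrow> 'b) set"
  for f where
  base: "f \<in> iter_derivs f"
| step: "g \<in> iter_derivs f \<Longrightarrow> (\<lambda>x. frechet_derivative g (at x) v) \<in> iter_derivs f"

definition smooth_on :: "'a::euclidean_space set \<Rightarrow> ('a \<Rightarrow> 'b::euclidean_space) \<Rightarrow> bool" where
  "smooth_on U f \<longleftrightarrow> open U \<and> (\<forall>g\<in>iter_derivs f. g differentiable_on U)"

section \<open>Smooth manifolds (carrier = the whole type, with its topology)\<close>

definition is_chart :: "'a::topological_space set \<times> ('a \<Rightarrow> 'e::euclidean_space) \<Rightarrow> bool" where
  "is_chart c \<longleftrightarrow> (case c of (U, \<phi>) \<Rightarrow>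
     open U \<and> open (\<phi> ` U) \<and> homeomorphism U (\<phi> ` U) \<phi> (inv_into U \<phi>))"

definition smooth_atlas :: "('a::topological_space set \<times> ('a \<Rightarrow> 'e::euclidean_space)) set \<Rightarrow> bool" where
  "smooth_atlas A \<longleftrightarrow> (\<forall>c\<in>A. is_chart c) \<and> \<Union>(fst ` A) = UNIV \<and>
     (\<forall>(U,\<phi>)\<in>A. \<forall>(V,\<psi>)\<in>A. smooth_on (\<phi> ` (U \<inter> V)) (\<psi> \<circ> inv_into U \<phi>))"

definition smooth_map_open ::
  "('a::topological_space set \<times> ('a \<Rightarrow> 'e::euclidean_space)) set \<Rightarrow>
   ('b::topological_space set \<times> ('b \<Rightarrow> 'f::euclidean_space)) set \<Rightarrow> 'a set \<Rightarrow> ('a \<Rightarrow> 'b) \<Rightarrow> bool" where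
  "smooth_map_open A B W f \<longleftrightarrow> open W \<and> continuous_on W f \<and>
     (\<forall>(U,\<phi>)\<in>A. \<forall>(V,\<psi>)\<in>B. smooth_on (\<phi> ` (U \<inter> W \<inter> f -` V)) (\<psi> \<circ> f \<circ> inv_into U \<phi>))"

definition smooth_map ::
  "('a::topological_space set \<times> ('a \<Rightarrow> 'e::euclidean_space)) set \<Rightarrow>
   ('b::topological_space set \<times> ('b \<Rightarrow> 'f::euclidean_space)) set \<Rightarrow> ('a \<Rightarrow> 'b) \<Rightarrow> bool" where
  "smooth_map A B f \<longleftrightarrow> smooth_map_open A B UNIV f"

definition smooth_map_on ::
  "('a::topological_space set \<times> ('a \<Rightarrow> 'e::euclidean_space)) set \<Rightarrow>
   ('b::topological_space set \<times> ('b \<Rightarrow> 'f::euclidean_space)) set \<Rightarrow> 'a set \<Rightarrow> ('a \<Rightarrow> 'b) \<Rightarrow> bool" where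
  "smooth_map_on A B S f \<longleftrightarrow>
     (\<forall>p\<in>S. \<exists>W F. p \<in> W \<and> smooth_map_open A B W F \<and> (\<forall>q\<in>W \<inter> S. F q = f q))"

definition diffeo ::
  "('a::topological_space set \<times> ('a \<Rightarrow> 'e::euclidean_space)) set \<Rightarrow> ('a \<Rightarrow> 'a) \<Rightarrow> bool" where
  "diffeo A f \<longleftrightarrow> bij f \<and> smooth_map A A f \<and> smooth_map A A (inv f)"

definition submersion ::
  "('a::topological_space set \<times> ('a \<Rightarrow> 'e::euclidean_space)) set \<Rightarrow>
   ('b::topological_space set \<times> ('b \<Rightarrow> 'f::euclidean_space)) set \<Rightarrow> ('a \<Rightarrow> 'b) \<Rightarrow> bool" where
  "submersion A B f \<longleftrightarrow> surj f \<and> smooth_map A B f \<and>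
     (\<forall>(U,\<phi>)\<in>A. \<forall>(V,\<psi>)\<in>B. \<forall>x\<in>\<phi> ` (U \<inter> f -` V).
        surj (frechet_derivative (\<psi> \<circ> f \<circ> inv_into U \<phi>) (at x)))"

definition prod_atlas ::
  "('a::topological_space set \<times> ('a \<Rightarrow> 'e::euclidean_space)) set \<Rightarrow>
   ('b::topological_space set \<times> ('b \<Rightarrow> 'f::euclidean_space)) set \<Rightarrow>
   (('a \<times> 'b) set \<times> ('a \<times> 'b \<Rightarrow> 'e \<times> 'f)) set" where
  "prod_atlas A B = {(U \<times> V, \<lambda>(x,y). (\<phi> x, \<psi> y)) | U \<phi> V \<psi>. (U,\<phi>) \<in> A \<and> (V,\<psi>) \<in> B}"

definition composable :: "('g \<Rightarrow> 'm) \<Rightarrow> ('g \<Rightarrow> 'm) \<Rightarrow> ('g \<times> 'g) set" where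
  "composable s t = {(g,h). s g = t h}"

text \<open>Lie groupoid G \<rightrightarrows> M: G is the type 'g with atlas AG, M the (Hausdorff) type 'm
  with atlas AM; s, t source/target, u units, i inverse, mul multiplication
  (mul g h meaningful iff s g = t h).\<close>
definition lie_groupoid ::
  "('g::topological_space set \<times> ('g \<Rightarrow> 'e::euclidean_space)) set \<Rightarrow>
   ('m::t2_space set \<times> ('m \<Rightarrow> 'f::euclidean_space)) set \<Rightarrow>
   ('g \<Rightarrow> 'm) \<Rightarrow> ('g \<Rightarrow> 'm) \<Rightarrow> ('m \<Rightarrow> 'g) \<Rightarrow> ('g \<Rightarrow> 'g) \<Rightarrow> ('g \<Rightarrow> 'g \<Rightarrow> 'g) \<Rightarrow> bool" where
  "lie_groupoid AG AM s t u i mul \<longleftrightarrow>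
     smooth_atlas AG \<and> smooth_atlas AM \<and>
     submersion AG AM s \<and> submersion AG AM t \<and>
     smooth_map AM AG u \<and> smooth_map AG AG i \<and>
     smooth_map_on (prod_atlas AG AG) AG (composable s t) (\<lambda>(g,h). mul g h) \<and>
     (\<forall>m. s (u m) = m \<and> t (u m) = m) \<and>
     (\<forall>g h. s g = t h \<longrightarrow> s (mul g h) = s h \<and> t (mul g h) = t g) \<and>
     (\<forall>g h k. s g = t h \<longrightarrow> s h = t k \<longrightarrow> mul (mul g h) k = mul g (mul h k)) \<and>
     (\<forall>g. mul (u (t g)) g = g \<and> mul g (u (s g)) = g) \<and>
     (\<forall>g. s (i g) = t g \<and> t (i g) = s g \<and> mul g (i g) = u (t g) \<and> mul (i g) g = u (s g))"

definition bisection ::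
  "('g::topological_space set \<times> ('g \<Rightarrow> 'e::euclidean_space)) set \<Rightarrow>
   ('m::topological_space set \<times> ('m \<Rightarrow> 'f::euclidean_space)) set \<Rightarrow>
   ('g \<Rightarrow> 'm) \<Rightarrow> ('g \<Rightarrow> 'm) \<Rightarrow> ('m \<Rightarrow> 'g) \<Rightarrow> bool" where
  "bisection AG AM s t \<beta> \<longleftrightarrow> smooth_map AM AG \<beta> \<and> s \<circ> \<beta> = id \<and> diffeo AM (t \<circ> \<beta>)"

definition left_mult :: "('g \<Rightarrow> 'm) \<Rightarrow> ('g \<Rightarrow> 'g \<Rightarrow> 'g) \<Rightarrow> ('m \<Rightarrow> 'g) \<Rightarrow> 'g \<Rightarrow> 'g" where
  "left_mult t mul \<beta> g = mul (\<beta> (t g)) g"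

definition right_equivariant_diffeos ::
  "('g::topological_space set \<times> ('g \<Rightarrow> 'e::euclidean_space)) set \<Rightarrow>
   ('g \<Rightarrow> 'm) \<Rightarrow> ('g \<Rightarrow> 'm) \<Rightarrow> ('g \<Rightarrow> 'g \<Rightarrow> 'g) \<Rightarrow> ('g \<Rightarrow> 'g) set" where
  "right_equivariant_diffeos AG s t mul =
     {\<Phi>. diffeo AG \<Phi> \<and> s \<circ> \<Phi> = s \<and> (\<forall>g h. s g = t h \<longrightarrow> \<Phi> (mul g h) = mul (\<Phi> g) h)}"

end

theory Submission
  imports Defs
begin

text \<open>A right-equivariant map is determined by its values on the units: \<open>\<Phi> g = \<Phi> (u (t g)) . g\<close>,
  so \<open>\<Phi> = L\<^sub>\<beta>\<close> with \<open>\<beta> = \<Phi> \<circ> u\<close>, and \<open>t \<circ> \<beta>\<close> is a diffeomorphism with inverse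
  \<open>t \<circ> \<Phi>\<^sup>-\<^sup>1 \<circ> u\<close>. Conversely \<open>L\<^sub>\<beta>\<close> is equivariant by associativity, smooth as the
  multiplication composed with \<open>g \<mapsto> (\<beta> (t g), g)\<close>, and inverted by left multiplication
  with \<open>i \<circ> \<beta> \<circ> (t \<circ> \<beta>)\<^sup>-\<^sup>1\<close>, the inverse of \<open>\<beta>\<close> in the group of bisections.
  The analytic work is showing that maps which are \<open>C\<^sup>\<infinity>\<close> in charts are closed under
  composition and pairing.\<close>

section \<open>Finite-order differentiability\<close>

fun iter_deriv :: "('a::real_normed_vector \<Rightarrow> 'b::real_normed_vector) \<Rightarrow> 'a list \<Rightarrow> 'a \<Rightarrow> 'b" where
  "iter_deriv h [] = h"
| "iter_deriv h (v # vs) = (\<lambda>x. frechet_derivative (iter_deriv h vs) (at x) v)"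

lemma iter_derivs_eq_range_iter_deriv: "iter_derivs h = range (iter_deriv h)"
proof (intro equalityI subsetI)
  fix g assume "g \<in> iter_derivs h"
  then show "g \<in> range (iter_deriv h)"
  proof induct
    case base
    show ?case by (rule image_eqI[of _ _ "[]"]) auto
  next
    case (step g v)
    then obtain vs where "g = iter_deriv h vs" by auto
    then show ?case by (intro image_eqI[of _ _ "v # vs"]) auto
  qed
next
  fix g assume "g \<in> range (iter_deriv h)"
  then obtain vs where "g = iter_deriv h vs" by auto
  moreover have "iter_deriv h vs \<in> iter_derivs h"
    by (induction vs) (auto intro: iter_derivs.intros)
  ultimately show "g \<in> iter_derivs h" by simp
qed

lemma iter_deriv_snoc: "iter_deriv h (vs @ [v]) = iter_deriv (\<lambda>x. frechet_derivative h (at x) v) vs"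
  by (induction vs) auto

text \<open>Note the offset: \<open>differentiable_upto k\<close> asks for \<open>k + 1\<close> derivatives.\<close>

definition differentiable_upto ::
    "nat \<Rightarrow> 'a::real_normed_vector set \<Rightarrow> ('a \<Rightarrow> 'b::real_normed_vector) \<Rightarrow> bool" where
  "differentiable_upto k S h \<longleftrightarrow> (\<forall>vs. length vs \<le> k \<longrightarrow> iter_deriv h vs differentiable_on S)"

lemma smooth_on_iff_differentiable_upto: "smooth_on S h \<longleftrightarrow> open S \<and> (\<forall>k. differentiable_upto k S h)"
  unfolding smooth_on_def iter_derivs_eq_range_iter_deriv differentiable_upto_def by auto

lemma differentiable_upto_0: "differentiable_upto 0 S h \<longleftrightarrow> h differentiable_on S"
  by (simp add: differentiable_upto_def)

lemma differentiable_upto_Suc: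
  "differentiable_upto (Suc k) S h \<longleftrightarrow>
     h differentiable_on S \<and> (\<forall>v. differentiable_upto k S (\<lambda>x. frechet_derivative h (at x) v))"
    (is "?lhs \<longleftrightarrow> ?rhs")
proof
  assume lhs: ?lhs
  have "h differentiable_on S"
    using lhs[unfolded differentiable_upto_def, rule_format, of "[]"] by simp
  moreover have "differentiable_upto k S (\<lambda>x. frechet_derivative h (at x) v)" for v
    unfolding differentiable_upto_def
    using lhs[unfolded differentiable_upto_def, rule_format, of "_ @ [v]"] by (simp add: iter_deriv_snoc)
  ultimately show ?rhs by blast
next
  assume rhs: ?rhs
  show ?lhs
    unfolding differentiable_upto_def
  proof (intro allI impI)
    fix vs :: "'a list" assume "length vs \<le> Suc k"
    then show "iter_deriv h vs differentiable_on S"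
      using rhs by (cases vs rule: rev_exhaust) (auto simp: differentiable_upto_def iter_deriv_snoc)
  qed
qed

lemma differentiable_upto_SucD: "differentiable_upto (Suc k) S h \<Longrightarrow> differentiable_upto k S h"
  by (auto simp: differentiable_upto_def)

lemma frechet_derivative_cong_open:
  assumes "open X" "x \<in> X" "\<And>y. y \<in> X \<Longrightarrow> f y = g y"
  shows "frechet_derivative f (at x) = frechet_derivative g (at x)"
proof -
  have "(f has_derivative D) (at x) \<longleftrightarrow> (g has_derivative D) (at x)" for D
    using has_derivative_transform_within_open[of f D x UNIV X g]
      has_derivative_transform_within_open[of g D x UNIV X f] assms by auto
  then show ?thesis unfolding frechet_derivative_def by simp
qed

lemma iter_deriv_cong_open:
  assumes "open X" "\<And>y. y \<in> X \<Longrightarrow> f y = g y" "y \<in> X"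
  shows "iter_deriv f vs y = iter_deriv g vs y"
  using assms(3)
proof (induction vs arbitrary: y)
  case Nil
  then show ?case using assms by simp
next
  case (Cons v vs)
  then show ?case using frechet_derivative_cong_open[OF assms(1) Cons.prems Cons.IH] by simp
qed

lemma differentiable_on_cong_open:
  assumes "open X" "\<And>y. y \<in> X \<Longrightarrow> f y = g y" "f differentiable_on X"
  shows "g differentiable_on X"
  unfolding differentiable_on_eq_differentiable_at[OF assms(1)]
proof
  fix x assume x: "x \<in> X"
  then obtain D where "(f has_derivative D) (at x)"
    using assms(3) unfolding differentiable_on_eq_differentiable_at[OF assms(1)] differentiable_def
    by blast
  then have "(g has_derivative D) (at x)"
    by (rule has_derivative_transform_within_open[OF _ assms(1) x assms(2)])
  then show "g differentiable at x" unfolding differentiable_def by blast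
qed

lemma differentiable_upto_cong:
  assumes "open S" "\<And>y. y \<in> S \<Longrightarrow> f y = g y" "differentiable_upto k S f"
  shows "differentiable_upto k S g"
  unfolding differentiable_upto_def
proof (intro allI impI)
  fix vs :: "'a list" assume "length vs \<le> k"
  then have diff_f: "iter_deriv f vs differentiable_on S"
    using assms(3) unfolding differentiable_upto_def by blast
  show "iter_deriv g vs differentiable_on S"
    by (rule differentiable_on_cong_open[OF assms(1) _ diff_f])
      (rule iter_deriv_cong_open[OF assms(1,2)])
qed

lemma differentiable_upto_SucI:
  assumes "open S"
    and deriv: "\<And>y. y \<in> S \<Longrightarrow> (h has_derivative D y) (at y)"
    and "\<And>v. differentiable_upto k S (\<lambda>y. D y v)"
  shows "differentiable_upto (Suc k) S h"
proof -
  have "h differentiable_on S"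
    unfolding differentiable_on_eq_differentiable_at[OF assms(1)] differentiable_def
    using deriv by blast
  moreover have "differentiable_upto k S (\<lambda>x. frechet_derivative h (at x) v)" for v
  proof (rule differentiable_upto_cong[OF assms(1) _ assms(3)])
    fix y assume "y \<in> S"
    then show "D y v = frechet_derivative h (at y) v"
      using frechet_derivative_at[OF deriv] by metis
  qed
  ultimately show ?thesis by (simp add: differentiable_upto_Suc)
qed

lemma has_frechet_derivative_on_open:
  assumes "open S" "h differentiable_on S" "x \<in> S"
  shows "(h has_derivative frechet_derivative h (at x)) (at x)"
  using assms differentiable_on_eq_differentiable_at frechet_derivative_works by blast

lemma differentiable_upto_const: "differentiable_upto k S (\<lambda>x. c)"
  by (induction k arbitrary: c) (simp_all add: differentiable_upto_0 differentiable_upto_Suc)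

lemma differentiable_upto_add:
  assumes "open S" "differentiable_upto k S f" "differentiable_upto k S g"
  shows "differentiable_upto k S (\<lambda>x. f x + g x)"
  using assms(2,3)
proof (induction k arbitrary: f g)
  case 0
  then show ?case by (simp add: differentiable_upto_0)
next
  case (Suc k)
  then have "f differentiable_on S" "g differentiable_on S" by (auto simp: differentiable_upto_Suc)
  then have "((\<lambda>x. f x + g x) has_derivative
      (\<lambda>v. frechet_derivative f (at y) v + frechet_derivative g (at y) v)) (at y)" if "y \<in> S" for y
    using that by (intro has_derivative_add has_frechet_derivative_on_open[OF assms(1)])
  then show ?case
    using Suc by (intro differentiable_upto_SucI[OF assms(1)]) (auto simp: differentiable_upto_Suc)
qed

lemma differentiable_upto_sum:
  assumes "open S" "finite B" "\<And>b. b \<in> B \<Longrightarrow> differentiable_upto k S (F b)"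
  shows "differentiable_upto k S (\<lambda>x. \<Sum>b\<in>B. F b x)"
  using assms(2,3)
  by (induction B rule: finite_induct) (simp_all add: differentiable_upto_const differentiable_upto_add assms(1))

lemma differentiable_upto_linear:
  assumes "open S" "bounded_linear L" "differentiable_upto k S f"
  shows "differentiable_upto k S (\<lambda>x. L (f x))"
  using assms(3)
proof (induction k arbitrary: f)
  case 0
  then show ?case
    by (simp add: differentiable_upto_0 differentiable_on_compose
        bounded_linear_imp_differentiable_on[OF assms(2)])
next
  case (Suc k)
  then have "f differentiable_on S" by (simp add: differentiable_upto_Suc)
  then have "((\<lambda>x. L (f x)) has_derivative (\<lambda>v. L (frechet_derivative f (at y) v))) (at y)"
    if "y \<in> S" for y
    using that by (intro bounded_linear.has_derivative[OF assms(2)] has_frechet_derivative_on_open[OF assms(1)])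
  then show ?case
    using Suc by (intro differentiable_upto_SucI[OF assms(1)]) (auto simp: differentiable_upto_Suc)
qed

lemma differentiable_upto_scaleR:
  fixes f :: "'a::real_normed_vector \<Rightarrow> real" and g :: "'a \<Rightarrow> 'b::real_normed_vector"
  assumes "open S" "differentiable_upto k S f" "differentiable_upto k S g"
  shows "differentiable_upto k S (\<lambda>x. f x *\<^sub>R g x)"
  using assms(2,3)
proof (induction k arbitrary: f g)
  case 0
  then show ?case by (simp add: differentiable_upto_0)
next
  case (Suc k)
  then have "f differentiable_on S" "g differentiable_on S" by (auto simp: differentiable_upto_Suc)
  then have "((\<lambda>x. f x *\<^sub>R g x) has_derivative
      (\<lambda>v. f y *\<^sub>R frechet_derivative g (at y) v + frechet_derivative f (at y) v *\<^sub>R g y)) (at y)"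
    if "y \<in> S" for y
    using that by (intro has_derivative_scaleR has_frechet_derivative_on_open[OF assms(1)])
  moreover have "differentiable_upto k S
      (\<lambda>y. f y *\<^sub>R frechet_derivative g (at y) v + frechet_derivative f (at y) v *\<^sub>R g y)" for v
  proof (intro differentiable_upto_add[OF assms(1)] Suc.IH)
    show "differentiable_upto k S f" "differentiable_upto k S g"
      using Suc.prems by (auto intro: differentiable_upto_SucD)
    show "differentiable_upto k S (\<lambda>y. frechet_derivative g (at y) v)"
      "differentiable_upto k S (\<lambda>y. frechet_derivative f (at y) v)"
      using Suc.prems by (auto simp: differentiable_upto_Suc)
  qed
  ultimately show ?case by (rule differentiable_upto_SucI[OF assms(1)])
qed

lemma linear_eq_sum_Basis:
  fixes L :: "'a::euclidean_space \<Rightarrow> 'b::real_vector"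
  assumes "linear L"
  shows "L w = (\<Sum>b\<in>Basis. (w \<bullet> b) *\<^sub>R L b)"
proof -
  have "L w = L (\<Sum>b\<in>Basis. (w \<bullet> b) *\<^sub>R b)" by (simp add: euclidean_representation)
  also have "\<dots> = (\<Sum>b\<in>Basis. (w \<bullet> b) *\<^sub>R L b)"
    by (simp add: linear_sum[OF assms] linear_scale[OF assms])
  finally show ?thesis .
qed

lemma differentiable_upto_compose:
  fixes f :: "'a::euclidean_space \<Rightarrow> 'b::euclidean_space" and g :: "'b \<Rightarrow> 'c::real_normed_vector"
  assumes "open S" "open T" "f ` S \<subseteq> T" "differentiable_upto k T g" "differentiable_upto k S f"
  shows "differentiable_upto k S (\<lambda>x. g (f x))"
  using assms(4,5)
proof (induction k arbitrary: g)
  case 0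
  then have "f differentiable_on S" "g differentiable_on f ` S"
    using assms(3) by (auto simp: differentiable_upto_0 intro: differentiable_on_subset)
  then show ?case by (simp add: differentiable_upto_0 differentiable_on_compose)
next
  case (Suc k)
  then have df: "f differentiable_on S" and dg: "g differentiable_on T"
    by (auto simp: differentiable_upto_Suc)
  \<comment> \<open>Expanding in a basis writes the derivative of \<open>g \<circ> f\<close> through products of derivatives
    of \<open>f\<close> and of \<open>g\<close> composed with \<open>f\<close>, to which the induction hypothesis applies.\<close>
  have "((\<lambda>x. g (f x)) has_derivative
      (\<lambda>v. \<Sum>b\<in>Basis. (frechet_derivative f (at y) v \<bullet> b) *\<^sub>R frechet_derivative g (at (f y)) b)) (at y)"
    if y: "y \<in> S" for y
  proof -
    have fy: "f y \<in> T" using y assms(3) by auto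
    have "((\<lambda>x. g (f x)) has_derivative
        (\<lambda>v. frechet_derivative g (at (f y)) (frechet_derivative f (at y) v))) (at y)"
      using has_frechet_derivative_on_open[OF assms(1) df y] has_frechet_derivative_on_open[OF assms(2) dg fy]
      by (rule has_derivative_compose)
    also have "(\<lambda>v. frechet_derivative g (at (f y)) (frechet_derivative f (at y) v)) =
        (\<lambda>v. \<Sum>b\<in>Basis. (frechet_derivative f (at y) v \<bullet> b) *\<^sub>R frechet_derivative g (at (f y)) b)"
      using has_frechet_derivative_on_open[OF assms(2) dg fy]
      by (intro ext linear_eq_sum_Basis has_derivative_linear)
    finally show ?thesis .
  qed
  moreover have "differentiable_upto k S
      (\<lambda>y. \<Sum>b\<in>Basis. (frechet_derivative f (at y) v \<bullet> b) *\<^sub>R frechet_derivative g (at (f y)) b)" for v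
  proof (intro differentiable_upto_sum[OF assms(1) finite_Basis] differentiable_upto_scaleR[OF assms(1)])
    fix b :: 'b
    show "differentiable_upto k S (\<lambda>y. frechet_derivative f (at y) v \<bullet> b)"
      using Suc.prems(2)
      by (intro differentiable_upto_linear[OF assms(1) bounded_linear_inner_left])
        (simp add: differentiable_upto_Suc)
    show "differentiable_upto k S (\<lambda>y. frechet_derivative g (at (f y)) b)"
      using Suc.prems differentiable_upto_SucD by (intro Suc.IH) (auto simp: differentiable_upto_Suc)
  qed
  ultimately show ?case by (rule differentiable_upto_SucI[OF assms(1)])
qed

lemma smooth_on_compose:
  fixes f :: "'a::euclidean_space \<Rightarrow> 'b::euclidean_space" and g :: "'b \<Rightarrow> 'c::euclidean_space"
  assumes "smooth_on T g" "smooth_on S f" "f ` S \<subseteq> T"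
  shows "smooth_on S (\<lambda>x. g (f x))"
  using assms differentiable_upto_compose unfolding smooth_on_iff_differentiable_upto by blast

lemma smooth_on_cong:
  assumes "smooth_on S f" "\<And>x. x \<in> S \<Longrightarrow> f x = g x"
  shows "smooth_on S g"
  using assms differentiable_upto_cong unfolding smooth_on_iff_differentiable_upto by blast

lemma smooth_on_subset:
  assumes "smooth_on S f" "open N" "N \<subseteq> S"
  shows "smooth_on N f"
  using assms unfolding smooth_on_iff_differentiable_upto differentiable_upto_def
  by (meson differentiable_on_subset)

lemma smooth_on_local:
  assumes "open S" "\<And>x. x \<in> S \<Longrightarrow> \<exists>N. open N \<and> x \<in> N \<and> smooth_on N h"
  shows "smooth_on S h"
  unfolding smooth_on_def
proof (intro conjI ballI)
  show "open S" by fact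
  fix g assume g: "g \<in> iter_derivs h"
  show "g differentiable_on S"
    unfolding differentiable_on_eq_differentiable_at[OF assms(1)]
  proof
    fix x assume "x \<in> S"
    then obtain N where N: "open N" "x \<in> N" "smooth_on N h" using assms(2) by blast
    then have "g differentiable_on N" using g by (simp add: smooth_on_def)
    then show "g differentiable at x" using N differentiable_on_eq_differentiable_at by blast
  qed
qed

lemma smooth_on_Pair:
  fixes f :: "'a::euclidean_space \<Rightarrow> 'b::euclidean_space" and g :: "'a \<Rightarrow> 'c::euclidean_space"
  assumes "smooth_on S f" "smooth_on S g"
  shows "smooth_on S (\<lambda>x. (f x, g x))"
proof -
  have S: "open S" using assms smooth_on_def by blast
  have left: "bounded_linear (\<lambda>a::'b. (a, 0::'c))" and right: "bounded_linear (\<lambda>b::'c. (0::'b, b))"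
    by (intro bounded_linear_Pair bounded_linear_ident bounded_linear_zero)+
  have "differentiable_upto k S (\<lambda>x. (f x, 0::'c) + (0::'b, g x))" for k
    using assms unfolding smooth_on_iff_differentiable_upto
    by (intro differentiable_upto_add[OF S] differentiable_upto_linear[OF S left]
        differentiable_upto_linear[OF S right]) auto
  then show ?thesis using S unfolding smooth_on_iff_differentiable_upto by simp
qed

section \<open>Smooth maps between manifolds\<close>

text \<open>Charts of the target of a smooth map are only used through the following properties, which,
  unlike \<^const>\<open>smooth_atlas\<close>, are inherited by \<^const>\<open>prod_atlas\<close>.\<close>

definition weak_atlas :: "('a::topological_space set \<times> ('a \<Rightarrow> 'e)) set \<Rightarrow> bool" where
  "weak_atlas B \<longleftrightarrow>
     (\<forall>x. \<exists>V \<gamma>. (V, \<gamma>) \<in> B \<and> x \<in> V) \<and> (\<forall>V \<gamma>. (V, \<gamma>) \<in> B \<longrightarrow> open V \<and> inj_on \<gamma> V)"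

lemma smooth_map_openI:
  assumes "open W" "continuous_on W f"
    "\<And>U \<phi> V \<psi>. (U, \<phi>) \<in> A \<Longrightarrow> (V, \<psi>) \<in> B \<Longrightarrow>
       smooth_on (\<phi> ` (U \<inter> W \<inter> f -` V)) (\<psi> \<circ> f \<circ> inv_into U \<phi>)"
  shows "smooth_map_open A B W f"
  using assms unfolding smooth_map_open_def by auto

lemma smooth_map_openD:
  assumes "smooth_map_open A B W f"
  shows "open W" "continuous_on W f"
    "\<And>U \<phi> V \<psi>. (U, \<phi>) \<in> A \<Longrightarrow> (V, \<psi>) \<in> B \<Longrightarrow>
       smooth_on (\<phi> ` (U \<inter> W \<inter> f -` V)) (\<psi> \<circ> f \<circ> inv_into U \<phi>)"
  using assms unfolding smooth_map_open_def by auto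

lemma open_Int_vimage_continuous_on:
  assumes "open W" "continuous_on W f" "open V" "open U"
  shows "open (U \<inter> W \<inter> f -` V)"
proof -
  have "open (f -` V \<inter> W)" using continuous_on_open_vimage[OF assms(1)] assms(2,3) by blast
  moreover have "U \<inter> W \<inter> f -` V = U \<inter> (f -` V \<inter> W)" by auto
  ultimately show ?thesis using assms(4) by (simp add: open_Int)
qed

lemma smooth_atlas_chartD:
  assumes "smooth_atlas A" "(U, \<phi>) \<in> A"
  shows "open U" "open (\<phi> ` U)" "homeomorphism U (\<phi> ` U) \<phi> (inv_into U \<phi>)"
  using assms unfolding smooth_atlas_def is_chart_def by auto

lemma smooth_atlas_inj_on:
  assumes "smooth_atlas A" "(U, \<phi>) \<in> A"
  shows "inj_on \<phi> U"
  using smooth_atlas_chartD(3)[OF assms] unfolding homeomorphism_def by (metis inj_on_inverseI)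

lemma smooth_atlas_open_image:
  assumes "smooth_atlas A" "(U, \<phi>) \<in> A" "open X" "X \<subseteq> U"
  shows "open (\<phi> ` X)"
proof -
  have "openin (top_of_set U) X"
    using assms smooth_atlas_chartD(1)[OF assms(1,2)] by (simp add: openin_open_eq)
  then have "openin (top_of_set (\<phi> ` U)) (\<phi> ` X)"
    by (rule homeomorphism_imp_open_map[OF smooth_atlas_chartD(3)[OF assms(1,2)]])
  then show ?thesis using smooth_atlas_chartD(2)[OF assms(1,2)] by (simp add: openin_open_eq)
qed

lemma smooth_atlas_imp_weak_atlas:
  assumes "smooth_atlas A"
  shows "weak_atlas A"
proof -
  have "\<exists>V \<gamma>. (V, \<gamma>) \<in> A \<and> x \<in> V" for x
  proof -
    have "x \<in> \<Union>(fst ` A)" using assms unfolding smooth_atlas_def by auto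
    then obtain c where "c \<in> A" "x \<in> fst c" by auto
    then show ?thesis by (metis prod.collapse)
  qed
  then show ?thesis
    unfolding weak_atlas_def using smooth_atlas_chartD(1)[OF assms] smooth_atlas_inj_on[OF assms] by blast
qed

lemma weak_atlas_prod_atlas:
  fixes A :: "('a::topological_space set \<times> ('a \<Rightarrow> 'e::euclidean_space)) set"
    and B :: "('b::topological_space set \<times> ('b \<Rightarrow> 'f::euclidean_space)) set"
  assumes "weak_atlas A" "weak_atlas B"
  shows "weak_atlas (prod_atlas A B)"
proof -
  have "\<exists>V \<gamma>. (V, \<gamma>) \<in> prod_atlas A B \<and> x \<in> V" for x :: "'a \<times> 'b"
  proof -
    obtain U \<phi> where "(U, \<phi>) \<in> A" "fst x \<in> U" using assms(1) unfolding weak_atlas_def by blast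
    moreover obtain V \<psi> where "(V, \<psi>) \<in> B" "snd x \<in> V" using assms(2) unfolding weak_atlas_def by blast
    ultimately have "(U \<times> V, \<lambda>(a, b). (\<phi> a, \<psi> b)) \<in> prod_atlas A B" "x \<in> U \<times> V"
      unfolding prod_atlas_def by (auto simp: mem_Times_iff)
    then show ?thesis by blast
  qed
  moreover have "open V \<and> inj_on \<gamma> V" if chart: "(V, \<gamma>) \<in> prod_atlas A B" for V \<gamma>
  proof -
    obtain U1 \<phi>1 U2 \<phi>2 where
      "V = U1 \<times> U2" "\<gamma> = (\<lambda>(x, y). (\<phi>1 x, \<phi>2 y))" "(U1, \<phi>1) \<in> A" "(U2, \<phi>2) \<in> B"
      using chart unfolding prod_atlas_def by blast
    then show ?thesis using assms unfolding weak_atlas_def by (auto simp: open_Times inj_on_def)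
  qed
  ultimately show ?thesis unfolding weak_atlas_def by blast
qed

lemma smooth_map_open_compose_chart:
  assumes A: "smooth_atlas A" and B: "weak_atlas B" and C: "weak_atlas C"
    and f: "smooth_map_open A B W f" and g: "smooth_map_open B C W' g"
    and U: "(U, \<phi>) \<in> A" and V': "(V', \<gamma>) \<in> B" and V: "(V, \<psi>) \<in> C"
  shows "smooth_on (\<phi> ` (U \<inter> W \<inter> f -` (V' \<inter> W' \<inter> g -` V))) (\<psi> \<circ> (g \<circ> f) \<circ> inv_into U \<phi>)"
proof -
  let ?X = "U \<inter> W \<inter> f -` (V' \<inter> W' \<inter> g -` V)"
  have "open V'" "inj_on \<gamma> V'" "open V" using B C V' V unfolding weak_atlas_def by auto
  then have "open (V' \<inter> W' \<inter> g -` V)"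
    using open_Int_vimage_continuous_on[OF smooth_map_openD(1,2)[OF g]] by (simp add: Int_assoc)
  then have "open ?X"
    using open_Int_vimage_continuous_on[OF smooth_map_openD(1,2)[OF f]] smooth_atlas_chartD(1)[OF A U]
    by blast
  then have N: "open (\<phi> ` ?X)" by (rule smooth_atlas_open_image[OF A U]) auto
  have inj: "inj_on \<phi> U" by (rule smooth_atlas_inj_on[OF A U])
  have "smooth_on (\<gamma> ` (V' \<inter> W' \<inter> g -` V)) (\<psi> \<circ> g \<circ> inv_into V' \<gamma>)"
    by (rule smooth_map_openD(3)[OF g V' V])
  moreover have "smooth_on (\<phi> ` ?X) (\<gamma> \<circ> f \<circ> inv_into U \<phi>)"
    by (rule smooth_on_subset[OF smooth_map_openD(3)[OF f U V'] N]) auto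
  moreover have "(\<gamma> \<circ> f \<circ> inv_into U \<phi>) ` \<phi> ` ?X \<subseteq> \<gamma> ` (V' \<inter> W' \<inter> g -` V)"
    using inj by (auto simp: inv_into_f_f)
  ultimately have "smooth_on (\<phi> ` ?X) (\<lambda>n. (\<psi> \<circ> g \<circ> inv_into V' \<gamma>) ((\<gamma> \<circ> f \<circ> inv_into U \<phi>) n))"
    by (rule smooth_on_compose)
  then show ?thesis
    by (rule smooth_on_cong) (use inj \<open>inj_on \<gamma> V'\<close> in \<open>auto simp: inv_into_f_f\<close>)
qed

lemma smooth_map_open_compose:
  assumes A: "smooth_atlas A" and B: "weak_atlas B" and C: "weak_atlas C"
    and f: "smooth_map_open A B W f" and g: "smooth_map_open B C W' g" and fW: "f ` W \<subseteq> W'"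
  shows "smooth_map_open A C W (g \<circ> f)"
proof (rule smooth_map_openI)
  show W: "open W" by (rule smooth_map_openD(1)[OF f])
  show gf: "continuous_on W (g \<circ> f)"
    using smooth_map_openD(2)[OF f] continuous_on_subset[OF smooth_map_openD(2)[OF g] fW]
    by (rule continuous_on_compose)
  fix U \<phi> V \<psi> assume U: "(U, \<phi>) \<in> A" and V: "(V, \<psi>) \<in> C"
  have "open (U \<inter> W \<inter> (g \<circ> f) -` V)"
    using open_Int_vimage_continuous_on[OF W gf] V C smooth_atlas_chartD(1)[OF A U]
    unfolding weak_atlas_def by blast
  then have "open (\<phi> ` (U \<inter> W \<inter> (g \<circ> f) -` V))" by (rule smooth_atlas_open_image[OF A U]) auto
  then show "smooth_on (\<phi> ` (U \<inter> W \<inter> (g \<circ> f) -` V)) (\<psi> \<circ> (g \<circ> f) \<circ> inv_into U \<phi>)"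
  proof (rule smooth_on_local)
    fix y assume "y \<in> \<phi> ` (U \<inter> W \<inter> (g \<circ> f) -` V)"
    then obtain x where x: "x \<in> U" "x \<in> W" "g (f x) \<in> V" "y = \<phi> x" by auto
    obtain V' \<gamma> where V': "(V', \<gamma>) \<in> B" "f x \<in> V'" using B unfolding weak_atlas_def by blast
    let ?N = "\<phi> ` (U \<inter> W \<inter> f -` (V' \<inter> W' \<inter> g -` V))"
    have "smooth_on ?N (\<psi> \<circ> (g \<circ> f) \<circ> inv_into U \<phi>)"
      by (rule smooth_map_open_compose_chart[OF A B C f g U V'(1) V])
    moreover have "y \<in> ?N" using x V' fW by auto
    ultimately show "\<exists>N. open N \<and> y \<in> N \<and> smooth_on N (\<psi> \<circ> (g \<circ> f) \<circ> inv_into U \<phi>)"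
      unfolding smooth_on_def by blast
  qed
qed

lemma smooth_map_open_id:
  assumes A: "smooth_atlas A" and W: "open W"
  shows "smooth_map_open A A W id"
proof (rule smooth_map_openI[OF W continuous_on_id'])
  fix U \<phi> V \<psi> assume U: "(U, \<phi>) \<in> A" and V: "(V, \<psi>) \<in> A"
  have "smooth_on (\<phi> ` (U \<inter> V)) (\<psi> \<circ> inv_into U \<phi>)"
    using A U V unfolding smooth_atlas_def by fast
  moreover have "open (\<phi> ` (U \<inter> W \<inter> id -` V))"
    by (rule smooth_atlas_open_image[OF A U])
      (use W smooth_atlas_chartD(1)[OF A U] smooth_atlas_chartD(1)[OF A V] in auto)
  ultimately show "smooth_on (\<phi> ` (U \<inter> W \<inter> id -` V)) (\<psi> \<circ> id \<circ> inv_into U \<phi>)"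
    by (auto elim: smooth_on_subset)
qed

lemma smooth_map_open_Pair:
  assumes A: "smooth_atlas A" and f: "smooth_map_open A B W f" and g: "smooth_map_open A C W g"
  shows "smooth_map_open A (prod_atlas B C) W (\<lambda>x. (f x, g x))"
proof (rule smooth_map_openI)
  show "open W" by (rule smooth_map_openD(1)[OF f])
  show "continuous_on W (\<lambda>x. (f x, g x))"
    using smooth_map_openD(2)[OF f] smooth_map_openD(2)[OF g] by (rule continuous_on_Pair)
  fix U \<phi> V \<gamma> assume U: "(U, \<phi>) \<in> A" and "(V, \<gamma>) \<in> prod_atlas B C"
  then obtain V1 \<psi>1 V2 \<psi>2 where
    V: "V = V1 \<times> V2" "\<gamma> = (\<lambda>(x, y). (\<psi>1 x, \<psi>2 y))" "(V1, \<psi>1) \<in> B" "(V2, \<psi>2) \<in> C"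
    unfolding prod_atlas_def by auto
  let ?N1 = "\<phi> ` (U \<inter> W \<inter> f -` V1)" and ?N2 = "\<phi> ` (U \<inter> W \<inter> g -` V2)"
  have f1: "smooth_on ?N1 (\<psi>1 \<circ> f \<circ> inv_into U \<phi>)" by (rule smooth_map_openD(3)[OF f U V(3)])
  have g2: "smooth_on ?N2 (\<psi>2 \<circ> g \<circ> inv_into U \<phi>)" by (rule smooth_map_openD(3)[OF g U V(4)])
  have "U \<inter> W \<inter> (\<lambda>x. (f x, g x)) -` V = (U \<inter> W \<inter> f -` V1) \<inter> (U \<inter> W \<inter> g -` V2)"
    using V(1) by auto
  then have N: "\<phi> ` (U \<inter> W \<inter> (\<lambda>x. (f x, g x)) -` V) = ?N1 \<inter> ?N2"
    using inj_on_image_Int[OF smooth_atlas_inj_on[OF A U], of "U \<inter> W \<inter> f -` V1" "U \<inter> W \<inter> g -` V2"]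
    by auto
  have "open (?N1 \<inter> ?N2)" using f1 g2 unfolding smooth_on_def by blast
  then have "smooth_on (?N1 \<inter> ?N2) (\<lambda>x. ((\<psi>1 \<circ> f \<circ> inv_into U \<phi>) x, (\<psi>2 \<circ> g \<circ> inv_into U \<phi>) x))"
    by (intro smooth_on_Pair smooth_on_subset[OF f1] smooth_on_subset[OF g2]) auto
  then show "smooth_on (\<phi> ` (U \<inter> W \<inter> (\<lambda>x. (f x, g x)) -` V)) (\<gamma> \<circ> (\<lambda>x. (f x, g x)) \<circ> inv_into U \<phi>)"
    unfolding N by (rule smooth_on_cong) (simp add: V(2))
qed

lemma smooth_map_local:
  assumes A: "smooth_atlas A" and B: "weak_atlas B"
    and local: "\<And>x. \<exists>W. x \<in> W \<and> smooth_map_open A B W f"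
  shows "smooth_map A B f"
  unfolding smooth_map_def
proof (rule smooth_map_openI)
  show "open UNIV" by simp
  have "continuous_on (\<Union>{W. smooth_map_open A B W f}) f"
    by (rule continuous_on_open_Union) (auto dest: smooth_map_openD)
  moreover have "\<Union>{W. smooth_map_open A B W f} = UNIV" using local by blast
  ultimately show cont: "continuous_on UNIV f" by simp
  fix U \<phi> V \<psi> assume U: "(U, \<phi>) \<in> A" and V: "(V, \<psi>) \<in> B"
  have "open (U \<inter> UNIV \<inter> f -` V)"
    using open_Int_vimage_continuous_on[OF open_UNIV cont] V B smooth_atlas_chartD(1)[OF A U]
    unfolding weak_atlas_def by blast
  then have "open (\<phi> ` (U \<inter> UNIV \<inter> f -` V))" by (rule smooth_atlas_open_image[OF A U]) auto
  then show "smooth_on (\<phi> ` (U \<inter> UNIV \<inter> f -` V)) (\<psi> \<circ> f \<circ> inv_into U \<phi>)"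
  proof (rule smooth_on_local)
    fix y assume "y \<in> \<phi> ` (U \<inter> UNIV \<inter> f -` V)"
    then obtain x where x: "x \<in> U" "f x \<in> V" "y = \<phi> x" by auto
    obtain W where W: "x \<in> W" "smooth_map_open A B W f" using local by blast
    have "smooth_on (\<phi> ` (U \<inter> W \<inter> f -` V)) (\<psi> \<circ> f \<circ> inv_into U \<phi>)"
      by (rule smooth_map_openD(3)[OF W(2) U V])
    moreover have "y \<in> \<phi> ` (U \<inter> W \<inter> f -` V)" using x W(1) by auto
    ultimately show "\<exists>N. open N \<and> y \<in> N \<and> smooth_on N (\<psi> \<circ> f \<circ> inv_into U \<phi>)"
      unfolding smooth_on_def by blast
  qed
qed

lemma smooth_map_open_cong:
  assumes A: "smooth_atlas A" and F: "smooth_map_open A B W F" and eq: "\<And>x. x \<in> W \<Longrightarrow> F x = f x"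
  shows "smooth_map_open A B W f"
proof (rule smooth_map_openI)
  show "open W" by (rule smooth_map_openD(1)[OF F])
  show "continuous_on W f" using smooth_map_openD(2)[OF F] eq continuous_on_cong by blast
  fix U \<phi> V \<psi> assume U: "(U, \<phi>) \<in> A" and V: "(V, \<psi>) \<in> B"
  have "U \<inter> W \<inter> F -` V = U \<inter> W \<inter> f -` V" using eq by auto
  then have "smooth_on (\<phi> ` (U \<inter> W \<inter> f -` V)) (\<psi> \<circ> F \<circ> inv_into U \<phi>)"
    using smooth_map_openD(3)[OF F U V] by simp
  then show "smooth_on (\<phi> ` (U \<inter> W \<inter> f -` V)) (\<psi> \<circ> f \<circ> inv_into U \<phi>)"
    by (rule smooth_on_cong) (use eq smooth_atlas_inj_on[OF A U] in \<open>auto simp: inv_into_f_f\<close>)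
qed

lemma smooth_map_open_subset:
  assumes A: "smooth_atlas A" and B: "weak_atlas B" and f: "smooth_map_open A B W f"
    and W': "open W'" "W' \<subseteq> W"
  shows "smooth_map_open A B W' f"
proof (rule smooth_map_openI[OF W'(1)])
  show cont: "continuous_on W' f" by (rule continuous_on_subset[OF smooth_map_openD(2)[OF f] W'(2)])
  fix U \<phi> V \<psi> assume U: "(U, \<phi>) \<in> A" and V: "(V, \<psi>) \<in> B"
  have "open (U \<inter> W' \<inter> f -` V)"
    using open_Int_vimage_continuous_on[OF W'(1) cont] V B smooth_atlas_chartD(1)[OF A U]
    unfolding weak_atlas_def by blast
  then have "open (\<phi> ` (U \<inter> W' \<inter> f -` V))" by (rule smooth_atlas_open_image[OF A U]) auto
  then show "smooth_on (\<phi> ` (U \<inter> W' \<inter> f -` V)) (\<psi> \<circ> f \<circ> inv_into U \<phi>)"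
    by (rule smooth_on_subset[OF smooth_map_openD(3)[OF f U V]]) (use W'(2) in auto)
qed

lemma smooth_map_compose:
  assumes "smooth_atlas A" "weak_atlas B" "weak_atlas C" "smooth_map A B f" "smooth_map B C g"
  shows "smooth_map A C (g \<circ> f)"
  using assms smooth_map_open_compose unfolding smooth_map_def by blast

lemma diffeoI:
  assumes "smooth_map A A f" "smooth_map A A g" "g \<circ> f = id" "f \<circ> g = id"
  shows "diffeo A f"
  using assms o_bij inv_unique_comp unfolding diffeo_def by metis

lemma smooth_map_on_compose:
  assumes A: "smooth_atlas A" and B: "weak_atlas B" and C: "weak_atlas C"
    and P: "smooth_map A B P" "range P \<subseteq> S" and F: "smooth_map_on B C S F"
  shows "smooth_map A C (F \<circ> P)"
proof (rule smooth_map_local[OF A C])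
  fix x
  have "P x \<in> S" using P(2) by auto
  then obtain W F' where W: "P x \<in> W" "smooth_map_open B C W F'"
    and F': "\<forall>y\<in>W \<inter> S. F' y = F y"
    using F[unfolded smooth_map_on_def, rule_format] by blast
  have P_open: "smooth_map_open A B UNIV P" using P(1) unfolding smooth_map_def .
  have "open (P -` W)"
    using open_Int_vimage_continuous_on[OF open_UNIV smooth_map_openD(2)[OF P_open]
        smooth_map_openD(1)[OF W(2)] open_UNIV]
    by simp
  then have "smooth_map_open A B (P -` W) P"
    by (rule smooth_map_open_subset[OF A B P_open]) simp
  then have "smooth_map_open A C (P -` W) (F' \<circ> P)"
    by (rule smooth_map_open_compose[OF A B C _ W(2)]) auto
  moreover have "(F' \<circ> P) y = (F \<circ> P) y" if "y \<in> P -` W" for y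
    using that P(2) F' by (simp add: image_subset_iff)
  ultimately have "smooth_map_open A C (P -` W) (F \<circ> P)"
    by (rule smooth_map_open_cong[OF A])
  then show "\<exists>W. x \<in> W \<and> smooth_map_open A C W (F \<circ> P)" using W(1) by blast
qed

section \<open>Groupoids and left multiplications\<close>

definition right_equivariant ::
    "('g \<Rightarrow> 'm) \<Rightarrow> ('g \<Rightarrow> 'm) \<Rightarrow> ('g \<Rightarrow> 'g \<Rightarrow> 'g) \<Rightarrow> ('g \<Rightarrow> 'g) \<Rightarrow> bool" where
  "right_equivariant s t mul \<Phi> \<longleftrightarrow> s \<circ> \<Phi> = s \<and> (\<forall>g h. s g = t h \<longrightarrow> \<Phi> (mul g h) = mul (\<Phi> g) h)"

lemma right_equivariant_diffeos_eq:
  "right_equivariant_diffeos A s t mul = {\<Phi>. diffeo A \<Phi> \<and> right_equivariant s t mul \<Phi>}"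
  unfolding right_equivariant_diffeos_def right_equivariant_def by blast

locale groupoid =
  fixes s t :: "'g \<Rightarrow> 'm" and u :: "'m \<Rightarrow> 'g" and i :: "'g \<Rightarrow> 'g" and mul :: "'g \<Rightarrow> 'g \<Rightarrow> 'g"
  assumes source_unit: "s (u m) = m" and target_unit: "t (u m) = m"
    and source_mul: "s g = t h \<Longrightarrow> s (mul g h) = s h"
    and target_mul: "s g = t h \<Longrightarrow> t (mul g h) = t g"
    and mul_assoc: "s g = t h \<Longrightarrow> s h = t k \<Longrightarrow> mul (mul g h) k = mul g (mul h k)"
    and unit_mul: "mul (u (t g)) g = g" and mul_unit: "mul g (u (s g)) = g"
    and source_inverse: "s (i g) = t g" and target_inverse: "t (i g) = s g"
    and mul_inverse: "mul g (i g) = u (t g)" and inverse_mul: "mul (i g) g = u (s g)"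
begin

abbreviation equivariant :: "('g \<Rightarrow> 'g) \<Rightarrow> bool" where
  "equivariant \<equiv> right_equivariant s t mul"

definition bisection_inverse :: "('m \<Rightarrow> 'g) \<Rightarrow> 'm \<Rightarrow> 'g" where
  "bisection_inverse \<beta> = i \<circ> \<beta> \<circ> inv (t \<circ> \<beta>)"

lemma equivariant_source: "equivariant \<Phi> \<Longrightarrow> s (\<Phi> g) = s g"
  unfolding right_equivariant_def by (metis comp_apply)

lemma equivariant_mul: "equivariant \<Phi> \<Longrightarrow> s g = t h \<Longrightarrow> \<Phi> (mul g h) = mul (\<Phi> g) h"
  unfolding right_equivariant_def by blast

lemma equivariant_eq_left_mult:
  assumes "equivariant \<Phi>"
  shows "\<Phi> = left_mult t mul (\<Phi> \<circ> u)"
proof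
  fix g
  have "\<Phi> g = \<Phi> (mul (u (t g)) g)" by (simp add: unit_mul)
  also have "\<dots> = mul (\<Phi> (u (t g))) g" by (simp add: equivariant_mul[OF assms] source_unit)
  finally show "\<Phi> g = left_mult t mul (\<Phi> \<circ> u) g" by (simp add: left_mult_def)
qed

lemma equivariant_inv:
  assumes "equivariant \<Phi>" "bij \<Phi>"
  shows "equivariant (inv \<Phi>)"
proof -
  have inv_eq: "inv \<Phi> (\<Phi> g) = g" "\<Phi> (inv \<Phi> g) = g" for g
    using assms(2) by (simp_all add: bij_is_inj bij_is_surj surj_f_inv_f)
  have "s (inv \<Phi> g) = s g" for g
    by (metis inv_eq(2) equivariant_source[OF assms(1)])
  moreover have "inv \<Phi> (mul g h) = mul (inv \<Phi> g) h" if "s g = t h" for g h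
    by (metis inv_eq equivariant_mul[OF assms(1)] \<open>s (inv \<Phi> g) = s g\<close> that)
  ultimately show ?thesis unfolding right_equivariant_def by auto
qed

lemma equivariant_base_inverse:
  assumes "equivariant \<Psi>" "\<Psi> \<circ> \<Phi> = id"
  shows "(t \<circ> \<Psi> \<circ> u) \<circ> (t \<circ> \<Phi> \<circ> u) = id"
proof
  fix m
  define g where "g = \<Phi> (u m)"
  have "u m = \<Psi> g" using assms(2) unfolding g_def by (metis comp_apply id_apply)
  also have "\<dots> = mul (\<Psi> (u (t g))) g"
    by (subst equivariant_eq_left_mult[OF assms(1)]) (simp add: left_mult_def)
  finally have "t (u m) = t (\<Psi> (u (t g)))"
    by (simp add: target_mul equivariant_source[OF assms(1)] source_unit)
  then show "((t \<circ> \<Psi> \<circ> u) \<circ> (t \<circ> \<Phi> \<circ> u)) m = id m" by (simp add: g_def target_unit)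
qed

lemma left_mult_equivariant:
  assumes "s \<circ> \<beta> = id"
  shows "equivariant (left_mult t mul \<beta>)"
proof -
  have \<beta>: "s (\<beta> m) = m" for m using assms by (metis comp_apply id_apply)
  show ?thesis
    unfolding right_equivariant_def left_mult_def
    by (auto simp: fun_eq_iff source_mul target_mul mul_assoc \<beta>)
qed

lemma source_bisection_inverse:
  assumes "bij (t \<circ> \<beta>)"
  shows "s \<circ> bisection_inverse \<beta> = id"
proof -
  have "t (\<beta> (inv (t \<circ> \<beta>) m)) = m" for m
    using surj_f_inv_f[OF bij_is_surj[OF assms]] by simp
  then show ?thesis by (simp add: bisection_inverse_def fun_eq_iff source_inverse)
qed

lemma left_mult_bisection_inverse:
  assumes "s \<circ> \<beta> = id" "bij (t \<circ> \<beta>)"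
  shows "left_mult t mul (bisection_inverse \<beta>) \<circ> left_mult t mul \<beta> = id"
    and "left_mult t mul \<beta> \<circ> left_mult t mul (bisection_inverse \<beta>) = id"
proof -
  have \<beta>: "s (\<beta> m) = m" for m using assms(1) by (metis comp_apply id_apply)
  have inv_eq: "inv (t \<circ> \<beta>) (t (\<beta> m)) = m" "t (\<beta> (inv (t \<circ> \<beta>) m)) = m" for m
    using inv_f_f[OF bij_is_inj[OF assms(2)], of m] surj_f_inv_f[OF bij_is_surj[OF assms(2)], of m]
    by simp_all
  show "left_mult t mul (bisection_inverse \<beta>) \<circ> left_mult t mul \<beta> = id"
  proof
    fix g
    let ?b = "\<beta> (t g)"
    have "(left_mult t mul (bisection_inverse \<beta>) \<circ> left_mult t mul \<beta>) g = mul (i ?b) (mul ?b g)"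
      by (simp add: left_mult_def bisection_inverse_def target_mul \<beta> inv_eq)
    also have "\<dots> = g" by (simp add: mul_assoc[symmetric] source_inverse target_inverse \<beta> inverse_mul unit_mul)
    finally show "(left_mult t mul (bisection_inverse \<beta>) \<circ> left_mult t mul \<beta>) g = id g" by simp
  qed
  show "left_mult t mul \<beta> \<circ> left_mult t mul (bisection_inverse \<beta>) = id"
  proof
    fix g
    let ?c = "\<beta> (inv (t \<circ> \<beta>) (t g))"
    have "(left_mult t mul \<beta> \<circ> left_mult t mul (bisection_inverse \<beta>)) g = mul ?c (mul (i ?c) g)"
      by (simp add: left_mult_def bisection_inverse_def target_mul source_inverse target_inverse \<beta> inv_eq)
    also have "\<dots> = g" by (simp add: mul_assoc[symmetric] source_inverse target_inverse \<beta> inv_eq mul_inverse unit_mul)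
    finally show "(left_mult t mul \<beta> \<circ> left_mult t mul (bisection_inverse \<beta>)) g = id g" by simp
  qed
qed

end

section \<open>Lie groupoids\<close>

lemma lie_groupoid_imp_groupoid: "lie_groupoid AG AM s t u i mul \<Longrightarrow> groupoid s t u i mul"
  unfolding lie_groupoid_def groupoid_def by blast

lemma lie_groupoid_atlases:
  assumes "lie_groupoid AG AM s t u i mul"
  shows "smooth_atlas AG" "smooth_atlas AM" "weak_atlas AG" "weak_atlas AM"
  using assms smooth_atlas_imp_weak_atlas unfolding lie_groupoid_def by auto

lemma smooth_left_mult:
  assumes G: "lie_groupoid AG AM s t u i mul" and \<beta>: "smooth_map AM AG \<beta>" "s \<circ> \<beta> = id"
  shows "smooth_map AG AG (left_mult t mul \<beta>)"
proof -
  note atlases = lie_groupoid_atlases[OF G]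
  have "smooth_map AG AM t" using G unfolding lie_groupoid_def submersion_def by blast
  then have "smooth_map AG AG (\<beta> \<circ> t)" by (rule smooth_map_compose[OF atlases(1,4,3) _ \<beta>(1)])
  then have "smooth_map AG (prod_atlas AG AG) (\<lambda>g. ((\<beta> \<circ> t) g, id g))"
    using smooth_map_open_Pair[OF atlases(1) _ smooth_map_open_id[OF atlases(1) open_UNIV]]
    unfolding smooth_map_def by blast
  moreover have "range (\<lambda>g. ((\<beta> \<circ> t) g, id g)) \<subseteq> composable s t"
    using \<beta>(2) unfolding composable_def by (auto simp: fun_eq_iff)
  moreover have "smooth_map_on (prod_atlas AG AG) AG (composable s t) (\<lambda>(g, h). mul g h)"
    using G unfolding lie_groupoid_def by blast
  ultimately have "smooth_map AG AG ((\<lambda>(g, h). mul g h) \<circ> (\<lambda>g. ((\<beta> \<circ> t) g, id g)))"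
    by (rule smooth_map_on_compose[OF atlases(1) weak_atlas_prod_atlas[OF atlases(3,3)] atlases(3)])
  then show ?thesis by (simp add: comp_def left_mult_def[abs_def])
qed

lemma right_equivariant_diffeo_eq_left_mult:
  assumes G: "lie_groupoid AG AM s t u i mul" and \<Phi>: "\<Phi> \<in> right_equivariant_diffeos AG s t mul"
  shows "bisection AG AM s t (\<Phi> \<circ> u)" and "\<Phi> = left_mult t mul (\<Phi> \<circ> u)"
proof -
  interpret groupoid s t u i mul by (rule lie_groupoid_imp_groupoid[OF G])
  note atlases = lie_groupoid_atlases[OF G]
  have "smooth_map AG AM t" "smooth_map AM AG u"
    using G unfolding lie_groupoid_def submersion_def by blast+
  note compose = smooth_map_compose[OF atlases(2,3,3) this(2)] smooth_map_compose[OF atlases(2,3,4) _ this(1)]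
  have equiv: "equivariant \<Phi>" and "diffeo AG \<Phi>" using \<Phi> by (simp_all add: right_equivariant_diffeos_eq)
  then have "bij \<Phi>" "smooth_map AG AG \<Phi>" "smooth_map AG AG (inv \<Phi>)" unfolding diffeo_def by blast+
  have equiv_inv: "equivariant (inv \<Phi>)" by (rule equivariant_inv[OF equiv \<open>bij \<Phi>\<close>])
  have "diffeo AM (t \<circ> \<Phi> \<circ> u)"
  proof (rule diffeoI)
    show "smooth_map AM AM (t \<circ> \<Phi> \<circ> u)" "smooth_map AM AM (t \<circ> inv \<Phi> \<circ> u)"
      using compose(2)[OF compose(1)] \<open>smooth_map AG AG \<Phi>\<close> \<open>smooth_map AG AG (inv \<Phi>)\<close>
      by (simp_all add: o_assoc)
    show "(t \<circ> inv \<Phi> \<circ> u) \<circ> (t \<circ> \<Phi> \<circ> u) = id" "(t \<circ> \<Phi> \<circ> u) \<circ> (t \<circ> inv \<Phi> \<circ> u) = id"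
      using equivariant_base_inverse[OF equiv_inv inv_o_cancel[OF bij_is_inj[OF \<open>bij \<Phi>\<close>]]]
        equivariant_base_inverse[OF equiv surj_iff[THEN iffD1, OF bij_is_surj[OF \<open>bij \<Phi>\<close>]]]
      by simp_all
  qed
  moreover have "s \<circ> (\<Phi> \<circ> u) = id"
    by (simp add: fun_eq_iff equivariant_source[OF equiv] source_unit)
  ultimately show "bisection AG AM s t (\<Phi> \<circ> u)"
    unfolding bisection_def using compose(1) \<open>smooth_map AG AG \<Phi>\<close> by (simp add: o_assoc)
  show "\<Phi> = left_mult t mul (\<Phi> \<circ> u)" by (rule equivariant_eq_left_mult[OF equiv])
qed

lemma left_mult_right_equivariant_diffeo:
  assumes G: "lie_groupoid AG AM s t u i mul" and \<beta>: "bisection AG AM s t \<beta>"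
  shows "left_mult t mul \<beta> \<in> right_equivariant_diffeos AG s t mul"
proof -
  interpret groupoid s t u i mul by (rule lie_groupoid_imp_groupoid[OF G])
  note atlases = lie_groupoid_atlases[OF G]
  have \<beta>_smooth: "smooth_map AM AG \<beta>" and \<beta>_source: "s \<circ> \<beta> = id" and "diffeo AM (t \<circ> \<beta>)"
    using \<beta> unfolding bisection_def by blast+
  then have base: "bij (t \<circ> \<beta>)" "smooth_map AM AM (inv (t \<circ> \<beta>))" unfolding diffeo_def by blast+
  have "smooth_map AG AG i" using G unfolding lie_groupoid_def by blast
  then have "smooth_map AM AG (bisection_inverse \<beta>)"
    unfolding bisection_inverse_def
    using smooth_map_compose[OF atlases(2,3,3) smooth_map_compose[OF atlases(2,4,3) base(2) \<beta>_smooth]]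
    by (simp add: o_assoc)
  then have "diffeo AG (left_mult t mul \<beta>)"
    using smooth_left_mult[OF G \<beta>_smooth \<beta>_source] smooth_left_mult[OF G _ source_bisection_inverse[OF base(1)]]
      left_mult_bisection_inverse[OF \<beta>_source base(1)]
    by (blast intro: diffeoI)
  then show ?thesis
    by (simp add: right_equivariant_diffeos_eq left_mult_equivariant[OF \<beta>_source])
qed

theorem mainTheorem3:
  fixes AG :: "('g::topological_space set \<times> ('g \<Rightarrow> 'e::euclidean_space)) set"
    and AM :: "('m::t2_space set \<times> ('m \<Rightarrow> 'f::euclidean_space)) set"
    and s t :: "'g \<Rightarrow> 'm" and u :: "'m \<Rightarrow> 'g" and i :: "'g \<Rightarrow> 'g"
    and mul :: "'g \<Rightarrow> 'g \<Rightarrow> 'g"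
  assumes "lie_groupoid AG AM s t u i mul"
  shows "right_equivariant_diffeos AG s t mul =
         {left_mult t mul \<beta> | \<beta>. bisection AG AM s t \<beta>}"
  using right_equivariant_diffeo_eq_left_mult[OF assms] left_mult_right_equivariant_diffeo[OF assms]
  by blast

end
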